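(* (i) $(1,2;3,4)\sim(1,2;4,3)$. (ii) $(1,2;3,4;5)\sim(1,2;4,3;5)\sim(1,2;4,5;3)\sim(1,2;5,4;3)$. (iii) $(1,2;3,5;4)\sim(1,2;5,3;4)$.
   Context: A partially ordered pattern (POP) $p$ of size $k$ is a partial order $\le_p$ on $[k]$. A permutation $\pi=\pi_1\cdots\pi_n$ contains $p$ if there are indices $i_1<\dots<i_k$ with $\pi_{i_j}<\pi_{i_m}$ whenever $j<_p m$; otherwise it avoids $p$. $p\sim q$ (Wilf-equivalence) means the numbers of permutations of $[n]$ avoiding $p$ and avoiding $q$ coincide for all $n\ge1$. Notation: $(a,b;c,d)$ denotes the POP of size $4$ on $\{a,b,c,d\}=[4]$ whose only relations are $b<a$ and $d<c$; $(a,b;c,d;e)$ denotes the POP of size $5$ on $\{a,b,c,d,e\}=[5]$ whose only relations are $b<a$ and $d<c$ (so $e$ is isolated). *)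

theory Defs
  imports Main
begin

text \<open>A POP of size k is given by its strict order relation P on {1..k}:
  P j m means j <_p m.  Permutations of [n] are lists xs with distinct xs and
  set xs = {1..n}; entry pi_i is xs ! (i - 1).\<close>

definition pop_contains :: "nat \<Rightarrow> (nat \<Rightarrow> nat \<Rightarrow> bool) \<Rightarrow> nat list \<Rightarrow> bool" where
  "pop_contains k P xs \<longleftrightarrow>
     (\<exists>idx :: nat \<Rightarrow> nat. strict_mono_on {1..k} idx \<and>
        (\<forall>j\<in>{1..k}. 1 \<le> idx j \<and> idx j \<le> length xs) \<and>
        (\<forall>j\<in>{1..k}. \<forall>m\<in>{1..k}. P j m \<longrightarrow> xs ! (idx j - 1) < xs ! (idx m - 1)))"

definition perms :: "nat \<Rightarrow> nat list set" where
  "perms n = {xs. distinct xs \<and> set xs = {1..n}}"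

definition avoiders :: "nat \<Rightarrow> nat \<Rightarrow> (nat \<Rightarrow> nat \<Rightarrow> bool) \<Rightarrow> nat list set" where
  "avoiders n k P = {xs \<in> perms n. \<not> pop_contains k P xs}"

definition wilf_equiv :: "nat \<Rightarrow> (nat \<Rightarrow> nat \<Rightarrow> bool) \<Rightarrow> (nat \<Rightarrow> nat \<Rightarrow> bool) \<Rightarrow> bool" where
  "wilf_equiv k P Q \<longleftrightarrow> (\<forall>n\<ge>1. card (avoiders n k P) = card (avoiders n k Q))"

definition pop4 :: "nat \<Rightarrow> nat \<Rightarrow> nat \<Rightarrow> nat \<Rightarrow> (nat \<Rightarrow> nat \<Rightarrow> bool)" where
  "pop4 a b c d = (\<lambda>j m. (j = b \<and> m = a) \<or> (j = d \<and> m = c))"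

text \<open>(a,b;c,d;e): the only relations are b < a and d < c (e isolated).\<close>
definition pop5 :: "nat \<Rightarrow> nat \<Rightarrow> nat \<Rightarrow> nat \<Rightarrow> nat \<Rightarrow> (nat \<Rightarrow> nat \<Rightarrow> bool)" where
  "pop5 a b c d e = (\<lambda>j m. (j = b \<and> m = a) \<or> (j = d \<and> m = c))"

end

theory Submission
  imports Defs "HOL-Library.Multiset"
begin

text \<open>Containing (1,2;C,D) or (1,2;C,D;E) means having an inversion \<open>\<pi>\<^sub>a > \<pi>\<^sub>b\<close> with
  \<open>a < b\<close>, followed somewhere to the right of \<open>b\<close> by a pair of entries in a prescribed
  relative order, with prescribed numbers of entries before, between and after it (the isolated
  points of the pattern).  Since this tail condition survives prepending entries, \<open>b\<close> may be
  taken to be the first position that ends an inversion.  An involution on the suffix after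
  that position which preserves its entries and swaps the two tail conditions (reversing the
  suffix, or its part strictly inside a fixed number of outer entries) leaves the first
  inversion end in place, and therefore is a bijection between the two sets of avoiders.\<close>

definition inversion_end :: "'a::linorder list \<Rightarrow> nat \<Rightarrow> bool" where
  "inversion_end xs b \<longleftrightarrow> b < length xs \<and> (\<exists>a<b. xs ! b < xs ! a)"

definition first_inversion_end :: "'a::linorder list \<Rightarrow> nat" where
  "first_inversion_end xs = (LEAST b. inversion_end xs b)"

lemma ex_inversion_end_iff: "(\<exists>b. inversion_end xs b) \<longleftrightarrow> \<not> sorted xs"
  unfolding inversion_end_def sorted_iff_nth_mono_less by (auto simp: not_le)

lemma inversion_end_first_inversion_end:
  "\<not> sorted xs \<Longrightarrow> inversion_end xs (first_inversion_end xs)"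
  unfolding first_inversion_end_def using ex_inversion_end_iff by (metis LeastI_ex)

lemma inversion_end_append:
  assumes "b < length us"
  shows "inversion_end (us @ vs) b \<longleftrightarrow> inversion_end us b"
proof -
  have "(us @ vs) ! a = us ! a" if "a \<le> b" for a
    using that assms by (simp add: nth_append)
  with assms show ?thesis
    unfolding inversion_end_def by auto
qed

lemma first_inversion_end_append:
  assumes "\<not> sorted us"
  shows "first_inversion_end (us @ vs) = first_inversion_end us"
  unfolding first_inversion_end_def
proof (rule Least_equality)
  let ?b = "LEAST b. inversion_end us b"
  have "inversion_end us ?b"
    using inversion_end_first_inversion_end[OF assms] by (simp add: first_inversion_end_def)
  moreover from this have "?b < length us"
    by (simp add: inversion_end_def)
  ultimately show "inversion_end (us @ vs) ?b"
    by (simp add: inversion_end_append)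
  fix c
  assume "inversion_end (us @ vs) c"
  show "?b \<le> c"
  proof (cases "c < length us")
    case True
    with \<open>inversion_end (us @ vs) c\<close> have "inversion_end us c"
      by (simp add: inversion_end_append)
    then show ?thesis by (rule Least_le)
  next
    case False
    with \<open>inversion_end us ?b\<close> show ?thesis by (simp add: inversion_end_def)
  qed
qed

lemma take_first_inversion_end_append:
  assumes "\<not> sorted xs"
  defines "b \<equiv> first_inversion_end xs"
  shows "\<not> sorted (take (Suc b) xs @ ys)" "first_inversion_end (take (Suc b) xs @ ys) = b"
proof -
  have end_b: "inversion_end xs b"
    unfolding b_def by (rule inversion_end_first_inversion_end[OF assms(1)])
  then have "b < length (take (Suc b) xs)"
    by (simp add: inversion_end_def)
  with end_b have "inversion_end (take (Suc b) xs) b"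
    using inversion_end_append[of b "take (Suc b) xs" "drop (Suc b) xs"] by simp
  then have unsorted: "\<not> sorted (take (Suc b) xs)"
    using ex_inversion_end_iff by blast
  then show "\<not> sorted (take (Suc b) xs @ ys)"
    by (auto simp: sorted_append)
  have "first_inversion_end (take (Suc b) xs) = b"
    using first_inversion_end_append[OF unsorted, of "drop (Suc b) xs"] by (simp add: b_def)
  with unsorted show "first_inversion_end (take (Suc b) xs @ ys) = b"
    by (simp add: first_inversion_end_append)
qed

definition inversion_followed_by :: "('a list \<Rightarrow> bool) \<Rightarrow> 'a::linorder list \<Rightarrow> bool" where
  "inversion_followed_by T xs \<longleftrightarrow>
     (\<exists>a b. a < b \<and> b < length xs \<and> xs ! b < xs ! a \<and> T (drop (Suc b) xs))"

definition map_after_first_inversion ::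
    "('a list \<Rightarrow> 'a list) \<Rightarrow> 'a::linorder list \<Rightarrow> 'a list" where
  "map_after_first_inversion g xs =
     (if sorted xs then xs
      else take (Suc (first_inversion_end xs)) xs @ g (drop (Suc (first_inversion_end xs)) xs))"

lemma drop_imp_of_Cons_closed:
  assumes "\<And>x s. T s \<Longrightarrow> T (x # s)"
  shows "T (drop k s) \<Longrightarrow> T s"
proof (induction s arbitrary: k)
  case (Cons x s)
  then show ?case
    using assms by (cases k) auto
qed simp

lemma inversion_followed_by_iff_first:
  assumes "\<And>x s. T s \<Longrightarrow> T (x # s)"
  shows "inversion_followed_by T xs \<longleftrightarrow>
    \<not> sorted xs \<and> T (drop (Suc (first_inversion_end xs)) xs)"
proof
  assume "inversion_followed_by T xs"
  then obtain a b where ab: "a < b" "b < length xs" "xs ! b < xs ! a" "T (drop (Suc b) xs)"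
    unfolding inversion_followed_by_def by blast
  then have "inversion_end xs b"
    unfolding inversion_end_def by blast
  then have unsorted: "\<not> sorted xs" and "first_inversion_end xs \<le> b"
    using ex_inversion_end_iff by (auto simp: first_inversion_end_def intro: Least_le)
  then have "drop (Suc b) xs =
      drop (b - first_inversion_end xs) (drop (Suc (first_inversion_end xs)) xs)"
    by simp
  with ab(4) have "T (drop (Suc (first_inversion_end xs)) xs)"
    using drop_imp_of_Cons_closed[of T, OF assms] by metis
  with unsorted show "\<not> sorted xs \<and> T (drop (Suc (first_inversion_end xs)) xs)"
    by blast
next
  assume "\<not> sorted xs \<and> T (drop (Suc (first_inversion_end xs)) xs)"
  moreover from this have "inversion_end xs (first_inversion_end xs)"
    by (blast intro: inversion_end_first_inversion_end)
  ultimately show "inversion_followed_by T xs"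
    unfolding inversion_followed_by_def inversion_end_def by blast
qed

lemma map_after_first_inversion_unsorted:
  assumes "\<not> sorted xs"
  defines "b \<equiv> first_inversion_end xs"
  shows "\<not> sorted (map_after_first_inversion g xs)"
    and "first_inversion_end (map_after_first_inversion g xs) = b"
    and "take (Suc b) (map_after_first_inversion g xs) = take (Suc b) xs"
    and "drop (Suc b) (map_after_first_inversion g xs) = g (drop (Suc b) xs)"
proof -
  have eq: "map_after_first_inversion g xs = take (Suc b) xs @ g (drop (Suc b) xs)"
    using assms unfolding map_after_first_inversion_def by simp
  have "b < length xs"
    using inversion_end_first_inversion_end[OF assms(1)] by (simp add: b_def inversion_end_def)
  then have len: "length (take (Suc b) xs) = Suc b"
    by simp
  show "\<not> sorted (map_after_first_inversion g xs)"
    "first_inversion_end (map_after_first_inversion g xs) = b"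
    unfolding eq b_def using take_first_inversion_end_append[OF assms(1)] by simp_all
  show "take (Suc b) (map_after_first_inversion g xs) = take (Suc b) xs"
    "drop (Suc b) (map_after_first_inversion g xs) = g (drop (Suc b) xs)"
    unfolding eq using len by simp_all
qed

lemma map_after_first_inversion_involution:
  assumes "\<And>s. g (g s) = s"
  shows "map_after_first_inversion g (map_after_first_inversion g xs) = xs"
proof (cases "sorted xs")
  case False
  let ?ys = "map_after_first_inversion g xs" and ?b = "first_inversion_end xs"
  have "map_after_first_inversion g ?ys = take (Suc ?b) ?ys @ g (drop (Suc ?b) ?ys)"
    using map_after_first_inversion_unsorted[OF False]
    unfolding map_after_first_inversion_def[of g ?ys] by simp
  also have "\<dots> = take (Suc ?b) xs @ drop (Suc ?b) xs"
    using map_after_first_inversion_unsorted[OF False] assms by simp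
  finally show ?thesis
    by simp
qed (simp add: map_after_first_inversion_def)

lemma mset_map_after_first_inversion:
  assumes "\<And>s. mset (g s) = mset s"
  shows "mset (map_after_first_inversion g xs) = mset xs"
proof (cases "sorted xs")
  case False
  have "mset xs =
      mset (take (Suc (first_inversion_end xs)) xs) + mset (drop (Suc (first_inversion_end xs)) xs)"
    by (simp flip: mset_append)
  with False show ?thesis
    unfolding map_after_first_inversion_def using assms by simp
qed (simp add: map_after_first_inversion_def)

lemma inversion_followed_by_map_after_first_inversion:
  assumes "\<And>s. T (g s) \<longleftrightarrow> U s"
    and "\<And>x s. T s \<Longrightarrow> T (x # s)" and "\<And>x s. U s \<Longrightarrow> U (x # s)"
  shows "inversion_followed_by T (map_after_first_inversion g xs) \<longleftrightarrow>
    inversion_followed_by U xs"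
proof (cases "sorted xs")
  case False
  then show ?thesis
    using map_after_first_inversion_unsorted[OF False]
    by (simp add: inversion_followed_by_iff_first[of T, OF assms(2)]
        inversion_followed_by_iff_first[of U, OF assms(3)] assms(1))
qed (simp add: map_after_first_inversion_def inversion_followed_by_iff_first[of T, OF assms(2)]
    inversion_followed_by_iff_first[of U, OF assms(3)])

lemma perms_mset_eq: "xs \<in> perms n \<Longrightarrow> mset ys = mset xs \<Longrightarrow> ys \<in> perms n"
  unfolding perms_def by (metis mem_Collect_eq mset_eq_imp_distinct_iff mset_eq_setD)

lemma wilf_equiv_if_tail_involution:
  fixes g :: "nat list \<Rightarrow> nat list"
  assumes P: "\<And>xs. pop_contains k P xs \<longleftrightarrow> inversion_followed_by T xs"
    and Q: "\<And>xs. pop_contains k Q xs \<longleftrightarrow> inversion_followed_by U xs"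
    and g_involution: "\<And>s. g (g s) = s" and mset_g: "\<And>s. mset (g s) = mset s"
    and T_g: "\<And>s. T (g s) \<longleftrightarrow> U s"
    and T_Cons: "\<And>x s. T s \<Longrightarrow> T (x # s)" and U_Cons: "\<And>x s. U s \<Longrightarrow> U (x # s)"
  shows "wilf_equiv k P Q"
  unfolding wilf_equiv_def
proof (intro allI impI)
  fix n :: nat
  let ?\<phi> = "map_after_first_inversion g"
  have \<phi>_\<phi>: "?\<phi> (?\<phi> xs) = xs" for xs
    using g_involution by (rule map_after_first_inversion_involution)
  have maps_to: "?\<phi> xs \<in> avoiders n k P" if "xs \<in> avoiders n k Q" for xs
    using that perms_mset_eq[OF _ mset_map_after_first_inversion[OF mset_g]]
      inversion_followed_by_map_after_first_inversion[of T g U, OF T_g T_Cons U_Cons]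
    by (auto simp: avoiders_def P Q)
  have maps_from: "?\<phi> xs \<in> avoiders n k Q" if "xs \<in> avoiders n k P" for xs
    using that perms_mset_eq[OF _ mset_map_after_first_inversion[OF mset_g]]
      inversion_followed_by_map_after_first_inversion[of T g U, OF T_g T_Cons U_Cons, of "?\<phi> xs"]
    by (auto simp: avoiders_def P Q \<phi>_\<phi>)
  have "bij_betw ?\<phi> (avoiders n k Q) (avoiders n k P)"
    by (rule bij_betw_byWitness[where f' = ?\<phi>]) (use \<phi>_\<phi> maps_to maps_from in auto)
  then show "card (avoiders n k P) = card (avoiders n k Q)"
    by (simp add: bij_betw_same_card)
qed

definition gapped_pair :: "('a \<Rightarrow> 'a \<Rightarrow> bool) \<Rightarrow> nat \<Rightarrow> nat \<Rightarrow> nat \<Rightarrow> 'a list \<Rightarrow> bool" where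
  "gapped_pair R p q r s \<longleftrightarrow>
     (\<exists>c d. p \<le> c \<and> c + q < d \<and> d + r < length s \<and> R (s ! c) (s ! d))"

lemma gapped_pair_Cons: "gapped_pair R p q r s \<Longrightarrow> gapped_pair R p q r (x # s)"
proof -
  assume "gapped_pair R p q r s"
  then obtain c d where "p \<le> c" "c + q < d" "d + r < length s" "R (s ! c) (s ! d)"
    unfolding gapped_pair_def by blast
  then show ?thesis
    unfolding gapped_pair_def by (intro exI[of _ "Suc c"] exI[of _ "Suc d"]) auto
qed

lemma gapped_pair_rev_imp:
  assumes "gapped_pair R p q r s"
  shows "gapped_pair (\<lambda>x y. R y x) r q p (rev s)"
proof -
  obtain c d where cd: "p \<le> c" "c + q < d" "d + r < length s" "R (s ! c) (s ! d)"
    using assms unfolding gapped_pair_def by blast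
  let ?c' = "length s - Suc d" and ?d' = "length s - Suc c"
  have "rev s ! ?c' = s ! d" "rev s ! ?d' = s ! c"
    using cd by (simp_all add: rev_nth Suc_diff_Suc)
  with cd show ?thesis
    unfolding gapped_pair_def by (intro exI[of _ ?c'] exI[of _ ?d']) auto
qed

lemma gapped_pair_rev:
  "gapped_pair R p q r (rev s) \<longleftrightarrow> gapped_pair (\<lambda>x y. R y x) r q p s"
  using gapped_pair_rev_imp[of R p q r "rev s"] gapped_pair_rev_imp[of "\<lambda>x y. R y x" r q p s]
  by auto

lemma gapped_pair_append:
  assumes "length u = p" "length w = r"
  shows "gapped_pair R p q r (u @ v @ w) \<longleftrightarrow> gapped_pair R 0 q 0 v"
proof
  assume "gapped_pair R p q r (u @ v @ w)"
  then obtain c d where cd: "p \<le> c" "c + q < d" "d + r < length (u @ v @ w)"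
      "R ((u @ v @ w) ! c) ((u @ v @ w) ! d)"
    unfolding gapped_pair_def by blast
  with assms have "c - p < length v" "d - p < length v"
    by auto
  with assms cd(1,2) have "(u @ v @ w) ! c = v ! (c - p)" "(u @ v @ w) ! d = v ! (d - p)"
    by (simp_all add: nth_append)
  with cd assms show "gapped_pair R 0 q 0 v"
    unfolding gapped_pair_def by (intro exI[of _ "c - p"] exI[of _ "d - p"]) auto
next
  assume "gapped_pair R 0 q 0 v"
  then obtain c d where cd: "c + q < d" "d < length v" "R (v ! c) (v ! d)"
    unfolding gapped_pair_def by auto
  with assms have "(u @ v @ w) ! (p + c) = v ! c" "(u @ v @ w) ! (p + d) = v ! d"
    by (simp_all add: nth_append)
  with cd assms show "gapped_pair R p q r (u @ v @ w)"
    unfolding gapped_pair_def by (intro exI[of _ "p + c"] exI[of _ "p + d"]) auto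
qed

definition reverse_inner :: "nat \<Rightarrow> nat \<Rightarrow> 'a list \<Rightarrow> 'a list" where
  "reverse_inner p r s =
     (if p + r \<le> length s
      then take p s @ rev (take (length s - p - r) (drop p s)) @ drop (length s - r) s
      else s)"

lemma reverse_inner_append:
  assumes "length u = p" "length w = r"
  shows "reverse_inner p r (u @ v @ w) = u @ rev v @ w"
  using assms unfolding reverse_inner_def by (simp add: take_append drop_append)

lemma split_by_outer_lengths:
  assumes "p + r \<le> length s"
  obtains u v w where "s = u @ v @ w" "length u = p" "length w = r"
proof
  let ?v = "take (length s - p - r) (drop p s)"
  have "drop p s = ?v @ drop (length s - p - r + p) s"
    by (metis append_take_drop_id drop_drop)
  also have "length s - p - r + p = length s - r"
    using assms by simp
  finally show "s = take p s @ ?v @ drop (length s - r) s"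
    by (metis append_take_drop_id)
qed (use assms in auto)

lemma reverse_inner_involution: "reverse_inner p r (reverse_inner p r s) = s"
proof (cases "p + r \<le> length s")
  case True
  then obtain u v w where "s = u @ v @ w" "length u = p" "length w = r"
    by (rule split_by_outer_lengths)
  then show ?thesis by (simp add: reverse_inner_append)
qed (simp add: reverse_inner_def)

lemma mset_reverse_inner: "mset (reverse_inner p r s) = mset s"
proof (cases "p + r \<le> length s")
  case True
  then obtain u v w where "s = u @ v @ w" "length u = p" "length w = r"
    by (rule split_by_outer_lengths)
  then show ?thesis by (simp add: reverse_inner_append)
qed (simp add: reverse_inner_def)

lemma gapped_pair_reverse_inner:
  "gapped_pair R p q r (reverse_inner p r s) \<longleftrightarrow> gapped_pair (\<lambda>x y. R y x) p q r s"
proof (cases "p + r \<le> length s")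
  case True
  then obtain u v w where "s = u @ v @ w" "length u = p" "length w = r"
    by (rule split_by_outer_lengths)
  then show ?thesis
    using gapped_pair_rev[of R 0 q 0 v] by (simp add: reverse_inner_append gapped_pair_append)
next
  case False
  then have "\<not> gapped_pair R' p q r s" for R' :: "'a \<Rightarrow> 'a \<Rightarrow> bool"
    unfolding gapped_pair_def by auto
  with False show ?thesis by (simp add: reverse_inner_def)
qed

lemma strict_mono_on_add_diff_le:
  fixes f :: "nat \<Rightarrow> nat"
  assumes "strict_mono_on {1..k} f" "1 \<le> i" "i \<le> j" "j \<le> k"
  shows "f i + (j - i) \<le> f j"
  using assms(3,4)
proof (induction j rule: dec_induct)
  case (step j)
  then have "f j < f (Suc j)"
    using assms(2) by (intro strict_mono_onD[OF assms(1)]) auto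
  with step show ?case
    by simp
qed simp

lemma inversion_followed_by_gapped_pair_iff:
  "inversion_followed_by (gapped_pair R p q r) xs \<longleftrightarrow>
    (\<exists>a b c d. a < b \<and> b < length xs \<and> xs ! b < xs ! a \<and>
      p \<le> c \<and> c + q < d \<and> d + r < length xs - Suc b \<and>
      R (xs ! (Suc b + c)) (xs ! (Suc b + d)))"
proof -
  have "gapped_pair R p q r (drop (Suc b) xs) \<longleftrightarrow>
      (\<exists>c d. p \<le> c \<and> c + q < d \<and> d + r < length xs - Suc b \<and>
        R (xs ! (Suc b + c)) (xs ! (Suc b + d)))"
    if "b < length xs" for b
    using that unfolding gapped_pair_def by simp
  then show ?thesis
    unfolding inversion_followed_by_def by blast
qed

lemma pop_contains_imp_inversion_followed_by_gapped_pair: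
  assumes "3 \<le> C" "3 \<le> D" "C \<le> k" "D \<le> k" "C \<noteq> D"
    and "pop_contains k (\<lambda>j m. (j = 2 \<and> m = 1) \<or> (j = D \<and> m = C)) xs"
  shows "inversion_followed_by (gapped_pair (\<lambda>x y. if C < D then y < x else x < y)
      (min C D - 3) (max C D - min C D - 1) (k - max C D)) xs"
proof -
  define lo hi where "lo = min C D" and "hi = max C D"
  have range: "3 \<le> lo" "lo < hi" "hi \<le> k"
    using assms(1-5) by (auto simp: lo_def hi_def)
  obtain idx where mono: "strict_mono_on {1..k} idx"
    and bounds: "\<forall>j\<in>{1..k}. 1 \<le> idx j \<and> idx j \<le> length xs"
    and rel: "\<forall>j\<in>{1..k}. \<forall>m\<in>{1..k}. (j = 2 \<and> m = 1) \<or> (j = D \<and> m = C) \<longrightarrow>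
      xs ! (idx j - 1) < xs ! (idx m - 1)"
    using assms(6) unfolding pop_contains_def by blast
  have "idx 1 < idx 2"
    using range by (intro strict_mono_onD[OF mono]) auto
  moreover have "idx 2 + (lo - 2) \<le> idx lo" "idx lo + (hi - lo) \<le> idx hi"
    "idx hi + (k - hi) \<le> idx k"
    using range by (intro strict_mono_on_add_diff_le[OF mono]; simp)+
  moreover have "1 \<le> idx 1" "idx k \<le> length xs"
    using bounds range by auto
  ultimately obtain a b c d where idx_at: "idx 1 = Suc a" "idx 2 = Suc b"
      "idx lo = Suc (Suc b + c)" "idx hi = Suc (Suc b + d)"
    and gaps: "a < b" "b < length xs" "lo - 3 \<le> c" "c + (hi - lo - 1) < d"
      "d + (k - hi) < length xs - Suc b"
    using range by (intro that[of "idx 1 - 1" "idx 2 - 1" "idx lo - idx 2 - 1" "idx hi - idx 2 - 1"])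
      linarith+
  have "xs ! b < xs ! a"
    using rel[rule_format, of 2 1] range idx_at by simp
  moreover have "xs ! (idx D - 1) < xs ! (idx C - 1)"
    by (rule rel[rule_format]) (use assms(1-4) in auto)
  then have "if C < D then xs ! (Suc b + d) < xs ! (Suc b + c)
      else xs ! (Suc b + c) < xs ! (Suc b + d)"
    using assms(5) idx_at by (auto simp: lo_def hi_def min_def max_def)
  ultimately show ?thesis
    unfolding inversion_followed_by_gapped_pair_iff lo_def[symmetric] hi_def[symmetric]
    using gaps by blast
qed

lemma inversion_followed_by_gapped_pair_imp_pop_contains:
  assumes "3 \<le> C" "3 \<le> D" "C \<le> k" "D \<le> k" "C \<noteq> D"
    and "inversion_followed_by (gapped_pair (\<lambda>x y. if C < D then y < x else x < y)
      (min C D - 3) (max C D - min C D - 1) (k - max C D)) xs"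
  shows "pop_contains k (\<lambda>j m. (j = 2 \<and> m = 1) \<or> (j = D \<and> m = C)) xs"
proof -
  define lo hi where "lo = min C D" and "hi = max C D"
  have range: "3 \<le> lo" "lo < hi" "hi \<le> k"
    using assms(1-5) by (auto simp: lo_def hi_def)
  obtain a b c d where ab: "a < b" "b < length xs" "xs ! b < xs ! a"
    and cd: "lo - 3 \<le> c" "c + (hi - lo - 1) < d" "d + (k - hi) < length xs - Suc b"
    and pair: "if C < D then xs ! (Suc b + d) < xs ! (Suc b + c)
      else xs ! (Suc b + c) < xs ! (Suc b + d)"
    using assms(6) unfolding inversion_followed_by_gapped_pair_iff lo_def[symmetric] hi_def[symmetric]
    by blast
  \<comment> \<open>the isolated points sit right after the constrained point preceding them\<close>
  define idx where "idx j = (if j \<le> 1 then a + j else if j < lo then b + j - 1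
    else if j < hi then b + c + 2 + (j - lo) else b + d + 2 + (j - hi))" for j
  have "strict_mono idx"
    unfolding strict_mono_Suc_iff idx_def using ab(1) cd(1,2) range by auto
  then have mono: "strict_mono_on {1..k} idx"
    by (rule monotone_on_subset[OF _ subset_UNIV])
  have idx_at: "idx 1 = Suc a" "idx 2 = Suc b" "idx lo = Suc (Suc b + c)" "idx hi = Suc (Suc b + d)"
    "idx k = Suc (Suc b + d) + (k - hi)"
    using range by (simp_all add: idx_def)
  have bounds: "\<forall>j\<in>{1..k}. 1 \<le> idx j \<and> idx j \<le> length xs"
  proof
    fix j :: nat
    assume "j \<in> {1..k}"
    then have "idx 1 \<le> idx j" "idx j \<le> idx k"
      using strict_mono_less_eq[OF \<open>strict_mono idx\<close>] by auto
    with idx_at(1,5) cd(3) show "1 \<le> idx j \<and> idx j \<le> length xs"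
      by linarith
  qed
  have "xs ! (idx 2 - 1) < xs ! (idx 1 - 1)"
    using ab(3) idx_at by simp
  moreover have "xs ! (idx D - 1) < xs ! (idx C - 1)"
  proof (cases "C < D")
    case True
    then have "lo = C" "hi = D"
      by (simp_all add: lo_def hi_def)
    with True pair idx_at show ?thesis
      by simp
  next
    case False
    then have "lo = D" "hi = C"
      by (simp_all add: lo_def hi_def)
    with False pair idx_at show ?thesis
      by simp
  qed
  ultimately have "\<forall>j\<in>{1..k}. \<forall>m\<in>{1..k}. (j = 2 \<and> m = 1) \<or> (j = D \<and> m = C) \<longrightarrow>
      xs ! (idx j - 1) < xs ! (idx m - 1)"
    by auto
  with mono bounds show ?thesis
    unfolding pop_contains_def by blast
qed

lemma pop_contains_iff_inversion_followed_by_gapped_pair: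
  assumes "3 \<le> C" "3 \<le> D" "C \<le> k" "D \<le> k" "C \<noteq> D"
  shows "pop_contains k (\<lambda>j m. (j = 2 \<and> m = 1) \<or> (j = D \<and> m = C)) xs \<longleftrightarrow>
    inversion_followed_by (gapped_pair (\<lambda>x y. if C < D then y < x else x < y)
      (min C D - 3) (max C D - min C D - 1) (k - max C D)) xs"
  using pop_contains_imp_inversion_followed_by_gapped_pair[OF assms]
    inversion_followed_by_gapped_pair_imp_pop_contains[OF assms] by blast

lemma wilf_equiv_two_pairs_if_tail_involution:
  fixes g :: "nat list \<Rightarrow> nat list"
  assumes "3 \<le> C" "3 \<le> D" "C \<le> k" "D \<le> k" "C \<noteq> D"
    and "3 \<le> C'" "3 \<le> D'" "C' \<le> k" "D' \<le> k" "C' \<noteq> D'"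
    and "\<And>s. g (g s) = s" "\<And>s. mset (g s) = mset s"
    and "\<And>s. gapped_pair (\<lambda>x y. if C < D then y < x else x < y)
        (min C D - 3) (max C D - min C D - 1) (k - max C D) (g s) \<longleftrightarrow>
      gapped_pair (\<lambda>x y. if C' < D' then y < x else x < y)
        (min C' D' - 3) (max C' D' - min C' D' - 1) (k - max C' D') s"
  shows "wilf_equiv k (\<lambda>j m. (j = 2 \<and> m = 1) \<or> (j = D \<and> m = C))
    (\<lambda>j m. (j = 2 \<and> m = 1) \<or> (j = D' \<and> m = C'))"
  by (rule wilf_equiv_if_tail_involution[OF
        pop_contains_iff_inversion_followed_by_gapped_pair[OF assms(1-5)]
        pop_contains_iff_inversion_followed_by_gapped_pair[OF assms(6-10)] assms(11-13)])
    (simp_all add: gapped_pair_Cons)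

theorem mainTheorem13:
  shows "wilf_equiv 4 (pop4 1 2 3 4) (pop4 1 2 4 3)
    \<and> wilf_equiv 5 (pop5 1 2 3 4 5) (pop5 1 2 4 3 5)
    \<and> wilf_equiv 5 (pop5 1 2 4 3 5) (pop5 1 2 4 5 3)
    \<and> wilf_equiv 5 (pop5 1 2 4 5 3) (pop5 1 2 5 4 3)
    \<and> wilf_equiv 5 (pop5 1 2 3 5 4) (pop5 1 2 5 3 4)"
proof (intro conjI)
  show "wilf_equiv 4 (pop4 1 2 3 4) (pop4 1 2 4 3)"
    unfolding pop4_def
    by (rule wilf_equiv_two_pairs_if_tail_involution[where g = rev]) (simp_all add: gapped_pair_rev)
  show "wilf_equiv 5 (pop5 1 2 3 4 5) (pop5 1 2 4 3 5)"
    unfolding pop5_def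
    by (rule wilf_equiv_two_pairs_if_tail_involution[where g = "reverse_inner 0 1"])
      (simp_all add: reverse_inner_involution mset_reverse_inner gapped_pair_reverse_inner)
  show "wilf_equiv 5 (pop5 1 2 4 3 5) (pop5 1 2 4 5 3)"
    unfolding pop5_def
    by (rule wilf_equiv_two_pairs_if_tail_involution[where g = rev]) (simp_all add: gapped_pair_rev)
  show "wilf_equiv 5 (pop5 1 2 4 5 3) (pop5 1 2 5 4 3)"
    unfolding pop5_def
    by (rule wilf_equiv_two_pairs_if_tail_involution[where g = "reverse_inner 1 0"])
      (simp_all add: reverse_inner_involution mset_reverse_inner gapped_pair_reverse_inner)
  show "wilf_equiv 5 (pop5 1 2 3 5 4) (pop5 1 2 5 3 4)"
    unfolding pop5_def
    by (rule wilf_equiv_two_pairs_if_tail_involution[where g = rev]) (simp_all add: gapped_pair_rev)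
qed

end
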